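(* Let $d\ge 2$ and let $t:\mathbb{R}^{d-1}\to\mathbb{R}$ be continuous. Then the map $h:\mathbb{R}^d\to\mathbb{R}^d$, $h(x)=(x_1,\dots,x_{d-1},x_d+t(x_1,\dots,x_{d-1}))$ is compactly approximated by $\mathcal{NN}_{\mathrm{LReLU}}(d,d,d)$: for every compact $K\subset\mathbb{R}^d$ and $\epsilon>0$ there is $g\in\mathcal{NN}_{\mathrm{LReLU}}(d,d,d)$ with $\sup_{x\in K}\|h(x)-g(x)\|_\infty<\epsilon$.
   Context: For $\beta\in\mathbb{R}$, $\mathrm{LReLU}_\beta(x)=x$ if $x\ge 0$ and $\beta x$ if $x<0$, applied componentwise to vectors. $\mathcal{NN}_{\mathrm{LReLU}}(d,d,d)$ is the set of all maps $W_{N+1}\circ\mathrm{LReLU}_{\beta_N}\circ W_N\circ\cdots\circ\mathrm{LReLU}_{\beta_1}\circ W_1:\mathbb{R}^d\to\mathbb{R}^d$ with $N\in\mathbb{N}_0$, $\beta_i\in\mathbb{R}$, integers $1\le d_1,\dots,d_N\le d$, $d_0=d_{N+1}=d$, and $W_i:\mathbb{R}^{d_{i-1}}\to\mathbb{R}^{d_i}$ affine. *)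

theory Defs
  imports "HOL-Analysis.Analysis"
begin

text \<open>Vectors of R^n are represented as functions nat => real whose entries
  at indices i >= n are zero. The topology on nat => real is the product topology
  (Function_Topology), which on the subspace of such vectors is the Euclidean one.\<close>

definition rvec :: "nat \<Rightarrow> (nat \<Rightarrow> real) set" where
  "rvec n = {x. \<forall>i\<ge>n. x i = 0}"

definition affine_map :: "nat \<Rightarrow> nat \<Rightarrow> (nat \<Rightarrow> nat \<Rightarrow> real) \<Rightarrow> (nat \<Rightarrow> real)
    \<Rightarrow> (nat \<Rightarrow> real) \<Rightarrow> (nat \<Rightarrow> real)" where
  "affine_map m n A b = (\<lambda>x i. if i < n then (\<Sum>j<m. A i j * x j) + b i else 0)"

definition LReLU :: "real \<Rightarrow> real \<Rightarrow> real" where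
  "LReLU \<beta> x = (if x \<ge> 0 then x else \<beta> * x)"

definition LReLU_vec :: "real \<Rightarrow> (nat \<Rightarrow> real) \<Rightarrow> (nat \<Rightarrow> real)" where
  "LReLU_vec \<beta> x = (\<lambda>i. LReLU \<beta> (x i))"

text \<open>nn_pre d k f: f = LReLU_{beta_N} o W_N o ... o LReLU_{beta_1} o W_1 with input
  dimension d, hidden widths 1 <= d_i <= d, and last width d_N = k (N = 0 gives identity, k = d).\<close>
inductive nn_pre :: "nat \<Rightarrow> nat \<Rightarrow> ((nat \<Rightarrow> real) \<Rightarrow> (nat \<Rightarrow> real)) \<Rightarrow> bool" where
  base: "nn_pre d d (\<lambda>x. x)"
| step: "nn_pre d m f \<Longrightarrow> 1 \<le> n \<Longrightarrow> n \<le> d \<Longrightarrow>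
         nn_pre d n (LReLU_vec \<beta> \<circ> affine_map m n A b \<circ> f)"

definition NN_LReLU :: "nat \<Rightarrow> ((nat \<Rightarrow> real) \<Rightarrow> (nat \<Rightarrow> real)) set" where
  "NN_LReLU d = {affine_map m d A b \<circ> f | m A b f. nn_pre d m f}"

text \<open>The map h(x) = (x_1,...,x_{d-1}, x_d + t(x_1,...,x_{d-1})) (0-indexed here).\<close>
definition shear_map :: "nat \<Rightarrow> ((nat \<Rightarrow> real) \<Rightarrow> real) \<Rightarrow> (nat \<Rightarrow> real) \<Rightarrow> (nat \<Rightarrow> real)" where
  "shear_map d t x = (\<lambda>i. if i < d - 1 then x i
      else if i = d - 1 then x i + t (\<lambda>j. if j < d - 1 then x j else 0) else 0)"

end

theory Submission
  imports Defs
begin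

text \<open>Write a point of \<open>\<real>\<^sup>d\<close> as \<open>(z, s)\<close> with \<open>z \<in> \<real>\<^bsup>d-1\<^esup>\<close>, and call \<open>\<phi>\<close>
  approximable on \<open>S\<close> if for every \<open>R\<close> the shear \<open>(z, s) \<mapsto> (z, s + \<phi> z)\<close> is uniformly
  approximated on \<open>S \<times> [-R, R]\<close> by width-\<open>d\<close> LReLU networks that leave \<open>z\<close> unchanged.
  Since such networks compose, approximable functions are closed under sums (of bounded functions)
  and scalar multiples, and affine functions are approximable by a single layer. The positive part
  is approximable as well: scale \<open>s\<close> by \<open>\<epsilon>\<close>, subtract \<open>\<phi>\<close>, apply the leaky ReLU of slope
  \<open>1 - \<epsilon>\<close>, add \<open>\<phi>\<close> back and scale by \<open>1/\<epsilon>\<close>; this computes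
  \<open>s - min (\<epsilon> s - \<phi> z) 0\<close>, which tends to \<open>s + max (\<phi> z) 0\<close> as \<open>\<epsilon> \<rightarrow> 0\<close>.
  So the continuous approximable functions form a lattice containing the affine functions,
  which interpolate any two values at two points; by the lattice version of the
  Stone--Weierstrass theorem this lattice is dense in \<open>C(S)\<close>. Applying this to \<open>t\<close> on the
  projection of \<open>K\<close> gives the theorem.\<close>

section \<open>Lattice version of the Stone--Weierstrass theorem\<close>

lemma continuous_on_open_sublevel:
  fixes f :: "'a::topological_space \<Rightarrow> real"
  assumes "continuous_on S f"
  obtains A where "open A" "\<And>z. z \<in> S \<Longrightarrow> z \<in> A \<longleftrightarrow> f z < c"
proof -
  obtain A where "open A" "A \<inter> S = f -` {..<c} \<inter> S"
    using continuous_on_open_invariant[THEN iffD1, rule_format, OF assms, of "{..<c}"] by auto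
  then show thesis by (intro that[of A]) auto
qed

lemma Min_image_closed:
  assumes "finite F" "F \<noteq> {}" "\<And>y. y \<in> F \<Longrightarrow> G y \<in> L"
    and min_closed: "\<And>g h. g \<in> L \<Longrightarrow> h \<in> L \<Longrightarrow> (\<lambda>z. min (g z) (h z)) \<in> L"
  shows "(\<lambda>z. Min ((\<lambda>y. G y z) ` F)) \<in> L"
  using assms(1-3)
proof (induction F rule: finite_ne_induct)
  case (insert y F)
  then show ?case
    using min_closed[of "G y" "\<lambda>z. Min ((\<lambda>y. G y z) ` F)"] by (simp add: Min_insert)
qed simp

lemma Max_image_closed:
  assumes "finite F" "F \<noteq> {}" "\<And>y. y \<in> F \<Longrightarrow> G y \<in> L"
    and max_closed: "\<And>g h. g \<in> L \<Longrightarrow> h \<in> L \<Longrightarrow> (\<lambda>z. max (g z) (h z)) \<in> L"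
  shows "(\<lambda>z. Max ((\<lambda>y. G y z) ` F)) \<in> L"
  using assms(1-3)
proof (induction F rule: finite_ne_induct)
  case (insert y F)
  then show ?case
    using max_closed[of "G y" "\<lambda>z. Max ((\<lambda>y. G y z) ` F)"] by (simp add: Max_insert)
qed simp

lemma lattice_approx_from_above:
  fixes S :: "'a::topological_space set" and L :: "('a \<Rightarrow> real) set"
  assumes S: "compact S"
    and cont: "\<And>g. g \<in> L \<Longrightarrow> continuous_on S g"
    and min_closed: "\<And>g h. g \<in> L \<Longrightarrow> h \<in> L \<Longrightarrow> (\<lambda>z. min (g z) (h z)) \<in> L"
    and interp: "\<And>y. y \<in> S \<Longrightarrow> \<exists>g\<in>L. g x = f x \<and> g y = f y"
    and f: "continuous_on S f" and e: "0 < e" and x: "x \<in> S"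
  shows "\<exists>h\<in>L. h x = f x \<and> (\<forall>z\<in>S. h z < f z + e)"
proof -
  have "\<forall>y\<in>S. \<exists>g\<in>L. \<exists>A. g x = f x \<and> open A \<and> y \<in> A \<and> (\<forall>z\<in>A \<inter> S. g z < f z + e)"
  proof
    fix y assume y: "y \<in> S"
    obtain g where g: "g \<in> L" "g x = f x" "g y = f y" using interp[OF y] by blast
    have "continuous_on S (\<lambda>z. g z - f z)" using cont[OF g(1)] f by (intro continuous_intros)
    then obtain A where "open A" "\<And>z. z \<in> S \<Longrightarrow> z \<in> A \<longleftrightarrow> g z - f z < e"
      by (rule continuous_on_open_sublevel[where c = e]) blast
    then show "\<exists>g\<in>L. \<exists>A. g x = f x \<and> open A \<and> y \<in> A \<and> (\<forall>z\<in>A \<inter> S. g z < f z + e)"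
      using g y e by (intro bexI[of _ g] conjI exI[of _ A]) auto
  qed
  then obtain G A where GA: "\<And>y. y \<in> S \<Longrightarrow> G y \<in> L \<and> G y x = f x \<and> open (A y) \<and> y \<in> A y
      \<and> (\<forall>z\<in>A y \<inter> S. G y z < f z + e)"
    by metis
  have "S \<subseteq> (\<Union>y\<in>S. A y)" using GA by blast
  then obtain F where F: "F \<subseteq> S" "finite F" "S \<subseteq> (\<Union>y\<in>F. A y)"
    using compactE_image[OF S, of S A] GA by blast
  have "F \<noteq> {}" using F(3) x by auto
  define h where "h z = Min ((\<lambda>y. G y z) ` F)" for z
  have "h \<in> L"
    unfolding h_def using Min_image_closed[OF F(2) \<open>F \<noteq> {}\<close> _ min_closed] GA F(1) by blast
  moreover have "h x = f x"
    using GA F(1) \<open>F \<noteq> {}\<close> by (simp add: h_def subset_iff image_constant_conv cong: image_cong)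
  moreover have "h z < f z + e" if z: "z \<in> S" for z
  proof -
    obtain y where y: "y \<in> F" "z \<in> A y" using F(3) z by auto
    have "h z \<le> G y z" unfolding h_def using y F(2) by (intro Min_le) auto
    also have "\<dots> < f z + e" using GA[of y] y F(1) z by auto
    finally show ?thesis .
  qed
  ultimately show ?thesis by blast
qed

lemma lattice_Stone_Weierstrass:
  fixes S :: "'a::topological_space set" and L :: "('a \<Rightarrow> real) set"
  assumes S: "compact S" "S \<noteq> {}"
    and cont: "\<And>g. g \<in> L \<Longrightarrow> continuous_on S g"
    and max_closed: "\<And>g h. g \<in> L \<Longrightarrow> h \<in> L \<Longrightarrow> (\<lambda>z. max (g z) (h z)) \<in> L"
    and min_closed: "\<And>g h. g \<in> L \<Longrightarrow> h \<in> L \<Longrightarrow> (\<lambda>z. min (g z) (h z)) \<in> L"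
    and interp: "\<And>x y a b. x \<in> S \<Longrightarrow> y \<in> S \<Longrightarrow> (x = y \<Longrightarrow> a = b) \<Longrightarrow> \<exists>g\<in>L. g x = a \<and> g y = b"
    and f: "continuous_on S f" and e: "0 < e"
  shows "\<exists>g\<in>L. \<forall>z\<in>S. \<bar>f z - g z\<bar> < e"
proof -
  have "\<forall>x\<in>S. \<exists>h\<in>L. \<exists>A. (\<forall>z\<in>S. h z < f z + e) \<and> open A \<and> x \<in> A \<and> (\<forall>z\<in>A \<inter> S. f z - h z < e)"
  proof
    fix x assume x: "x \<in> S"
    obtain h where h: "h \<in> L" "h x = f x" "\<forall>z\<in>S. h z < f z + e"
      using lattice_approx_from_above[OF S(1) cont min_closed interp f e x] x by blast
    have "continuous_on S (\<lambda>z. f z - h z)" using cont[OF h(1)] f by (intro continuous_intros)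
    then obtain A where "open A" "\<And>z. z \<in> S \<Longrightarrow> z \<in> A \<longleftrightarrow> f z - h z < e"
      by (rule continuous_on_open_sublevel[where c = e]) blast
    then show "\<exists>h\<in>L. \<exists>A. (\<forall>z\<in>S. h z < f z + e) \<and> open A \<and> x \<in> A \<and> (\<forall>z\<in>A \<inter> S. f z - h z < e)"
      using h x e by (intro bexI[of _ h] conjI exI[of _ A]) auto
  qed
  then obtain H A where HA: "\<And>x. x \<in> S \<Longrightarrow> H x \<in> L \<and> (\<forall>z\<in>S. H x z < f z + e) \<and> open (A x)
      \<and> x \<in> A x \<and> (\<forall>z\<in>A x \<inter> S. f z - H x z < e)"
    by metis
  have "S \<subseteq> (\<Union>x\<in>S. A x)" using HA by blast
  then obtain F where F: "F \<subseteq> S" "finite F" "S \<subseteq> (\<Union>x\<in>F. A x)"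
    using compactE_image[OF S(1), of S A] HA by blast
  have "F \<noteq> {}" using F(3) S(2) by auto
  define k where "k z = Max ((\<lambda>x. H x z) ` F)" for z
  have "k \<in> L"
    unfolding k_def using Max_image_closed[OF F(2) \<open>F \<noteq> {}\<close> _ max_closed] HA F(1) by blast
  moreover have "\<bar>f z - k z\<bar> < e" if z: "z \<in> S" for z
  proof -
    obtain x where x: "x \<in> F" "z \<in> A x" using F(3) z by auto
    have "f z - H x z < e" using HA[of x] x F(1) z by blast
    then have "f z - e < H x z" by simp
    also have "H x z \<le> k z" unfolding k_def using x F(2) by (intro Max_ge) auto
    finally have "f z - e < k z" .
    moreover have "k z < f z + e"
      unfolding k_def using F \<open>F \<noteq> {}\<close> HA z by (subst Max_less_iff) auto
    ultimately show ?thesis by linarith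
  qed
  ultimately show ?thesis by blast
qed

section \<open>Networks acting on the last coordinate\<close>

lemma LReLU_one [simp]: "LReLU 1 u = u"
  by (simp add: LReLU_def)

lemma LReLU_zero [simp]: "LReLU \<beta> 0 = 0"
  by (simp add: LReLU_def)

lemma LReLU_nonneg: "0 \<le> u \<Longrightarrow> LReLU \<beta> u = u"
  by (simp add: LReLU_def)

lemma abs_LReLU_le: "0 \<le> \<beta> \<Longrightarrow> \<beta> \<le> 1 \<Longrightarrow> \<bar>LReLU \<beta> u\<bar> \<le> \<bar>u\<bar>"
  by (auto simp: LReLU_def abs_mult mult_le_cancel_right1)

lemma LReLU_eq_sub_min: "LReLU (1 - \<epsilon>) u = u - \<epsilon> * min u 0"
  by (simp add: LReLU_def algebra_simps)

definition prefix_vec :: "nat \<Rightarrow> (nat \<Rightarrow> real) \<Rightarrow> nat \<Rightarrow> real" where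
  "prefix_vec D x = (\<lambda>j. if j < D then x j else 0)"

lemma prefix_vec_in_rvec: "prefix_vec D x \<in> rvec D"
  by (simp add: prefix_vec_def rvec_def)

lemma rvec_Suc_eq_prefix_upd: "x \<in> rvec (Suc D) \<Longrightarrow> x = (prefix_vec D x)(D := x D)"
  by (auto simp: prefix_vec_def rvec_def fun_eq_iff)

lemma shear_map_Suc: "shear_map (Suc D) t x = (prefix_vec D x)(D := x D + t (prefix_vec D x))"
  by (auto simp: shear_map_def prefix_vec_def fun_eq_iff)

lemma continuous_on_coordinate [continuous_intros]: "continuous_on S (\<lambda>x::nat \<Rightarrow> real. x j)"
  using continuous_on_product_then_coordinatewise[OF continuous_on_id] .

lemma continuous_on_prefix_vec: "continuous_on S (prefix_vec D)"
  unfolding prefix_vec_def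
proof (intro continuous_on_coordinatewise_then_product)
  show "continuous_on S (\<lambda>x. if j < D then x j else 0)" for j
    by (cases "j < D") (simp_all add: continuous_on_coordinate)
qed

lemma nn_pre_comp: "nn_pre d m g \<Longrightarrow> nn_pre d d f \<Longrightarrow> nn_pre d m (g \<circ> f)"
proof (induction rule: nn_pre.induct)
  case (step d m g n \<beta> A b)
  then have "nn_pre d m (g \<circ> f)" by blast
  from nn_pre.step[OF this step.hyps(2,3), of \<beta> A b] show ?case by (simp add: comp_def)
qed (simp add: comp_def)

lemma NN_LReLU_of_nn_pre:
  assumes "nn_pre d d N"
  shows "\<exists>g\<in>NN_LReLU d. \<forall>x. \<forall>i<d. g x i = N x i"
proof -
  let ?g = "affine_map d d (\<lambda>i j. if i = j then 1 else 0) (\<lambda>_. 0) \<circ> N"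
  have "?g x i = N x i" if "i < d" for x i
    using that by (simp add: affine_map_def if_distrib[of "\<lambda>c. c * _"] sum.delta cong: if_cong)
  moreover have "?g \<in> NN_LReLU d"
    unfolding NN_LReLU_def using assms by blast
  ultimately show ?thesis by blast
qed

definition last_coord_layer ::
    "nat \<Rightarrow> real \<Rightarrow> real \<Rightarrow> (nat \<Rightarrow> real) \<Rightarrow> real \<Rightarrow> real \<Rightarrow> (nat \<Rightarrow> real) \<Rightarrow> nat \<Rightarrow> real" where
  "last_coord_layer D \<beta> s a C c = LReLU_vec \<beta> \<circ> affine_map (Suc D) (Suc D)
     (\<lambda>i j. if i = D then (if j = D then s else a j) else if i = j then 1 else 0)
     (\<lambda>i. if i < D then C else c)"

lemma last_coord_layer_apply:
  "last_coord_layer D \<beta> s a C c x = (\<lambda>i. if i < D then LReLU \<beta> (x i + C)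
     else if i = D then LReLU \<beta> (s * x D + (\<Sum>j<D. a j * x j) + c) else 0)"
proof
  fix i
  show "last_coord_layer D \<beta> s a C c x i = (if i < D then LReLU \<beta> (x i + C)
     else if i = D then LReLU \<beta> (s * x D + (\<Sum>j<D. a j * x j) + c) else 0)"
  proof (cases "i < D")
    case True
    then have "(\<Sum>j<Suc D. (if i = j then 1 else 0) * x j) = x i"
      by (simp add: if_distrib[of "\<lambda>c. c * _"] sum.delta cong: if_cong)
    with True show ?thesis by (simp add: last_coord_layer_def LReLU_vec_def affine_map_def)
  next
    case False
    then show ?thesis
      by (auto simp: last_coord_layer_def LReLU_vec_def affine_map_def sum.lessThan_Suc
          intro!: arg_cong[of _ _ "LReLU \<beta>"] sum.cong)
  qed
qed

lemma nn_pre_last_coord_layer: "nn_pre (Suc D) (Suc D) (last_coord_layer D \<beta> s a C c)"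
  using nn_pre.step[OF nn_pre.base, of "Suc D" "Suc D"] by (simp add: last_coord_layer_def o_def)

lemma last_coord_layer_affine:
  assumes "z \<in> rvec D"
  shows "last_coord_layer D 1 s a 0 c (z(D := t)) = z(D := s * t + (\<Sum>j<D. a j * z j) + c)"
  using assms by (auto simp: last_coord_layer_apply rvec_def fun_eq_iff intro!: sum.cong)

text \<open>Shifting the other coordinates by \<open>C\<close> makes them nonnegative, so the activation only
  affects coordinate \<open>D\<close>.\<close>

lemma last_coord_layer_leaky:
  assumes "z \<in> rvec D" "\<forall>j<D. \<bar>z j\<bar> \<le> C"
  shows "last_coord_layer D 1 1 (\<lambda>_. 0) (-C) 0 (last_coord_layer D \<beta> 1 (\<lambda>_. 0) C 0 (z(D := t)))
    = z(D := LReLU \<beta> t)"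
proof -
  have "LReLU \<beta> (z j + C) = z j + C" if "j < D" for j
    using assms(2) that by (intro LReLU_nonneg) force
  then show ?thesis using assms(1) by (auto simp: last_coord_layer_apply rvec_def fun_eq_iff)
qed

section \<open>Approximable shears\<close>

text \<open>Coordinates are 0-indexed and \<open>D\<close> is the last one: for \<open>z \<in> S \<subseteq> rvec D\<close> the vector
  \<open>z(D := t)\<close> is the point \<open>(z, t)\<close> of \<open>\<real>\<^bsup>D+1\<^esup>\<close>.\<close>

definition realizes_shear :: "nat \<Rightarrow> (nat \<Rightarrow> real) set \<Rightarrow> ((nat \<Rightarrow> real) \<Rightarrow> real) \<Rightarrow> real \<Rightarrow> real
    \<Rightarrow> ((nat \<Rightarrow> real) \<Rightarrow> nat \<Rightarrow> real) \<Rightarrow> bool" where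
  "realizes_shear D S \<phi> R \<eta> N \<longleftrightarrow> nn_pre (Suc D) (Suc D) N \<and>
     (\<forall>z\<in>S. \<forall>t. \<bar>t\<bar> \<le> R \<longrightarrow> (\<exists>v. N (z(D := t)) = z(D := v) \<and> \<bar>v - t - \<phi> z\<bar> \<le> \<eta>))"

definition shear_approximable :: "nat \<Rightarrow> (nat \<Rightarrow> real) set \<Rightarrow> ((nat \<Rightarrow> real) \<Rightarrow> real) \<Rightarrow> bool" where
  "shear_approximable D S \<phi> \<longleftrightarrow> (\<forall>R \<eta>. 0 < \<eta> \<longrightarrow> (\<exists>N. realizes_shear D S \<phi> R \<eta> N))"

lemma realizes_shearD:
  assumes "realizes_shear D S \<phi> R \<eta> N" "z \<in> S" "\<bar>t\<bar> \<le> R"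
  obtains v where "N (z(D := t)) = z(D := v)" "\<bar>v - t - \<phi> z\<bar> \<le> \<eta>"
  using assms unfolding realizes_shear_def by blast

lemma shear_approximableD:
  assumes "shear_approximable D S \<phi>" "0 < \<eta>"
  obtains N where "realizes_shear D S \<phi> R \<eta> N"
  using assms unfolding shear_approximable_def by blast

lemma shear_approximable_affine:
  assumes "S \<subseteq> rvec D"
  shows "shear_approximable D S (\<lambda>z. (\<Sum>j<D. a j * z j) + c)"
proof -
  have "realizes_shear D S (\<lambda>z. (\<Sum>j<D. a j * z j) + c) R \<eta> (last_coord_layer D 1 1 a 0 c)"
    if "0 \<le> \<eta>" for R \<eta>
    unfolding realizes_shear_def
  proof (intro conjI ballI allI impI)
    show "nn_pre (Suc D) (Suc D) (last_coord_layer D 1 1 a 0 c)"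
      by (rule nn_pre_last_coord_layer)
    fix z t assume "z \<in> S"
    then have "z \<in> rvec D" using assms by blast
    then show "\<exists>v. last_coord_layer D 1 1 a 0 c (z(D := t)) = z(D := v)
        \<and> \<bar>v - t - ((\<Sum>j<D. a j * z j) + c)\<bar> \<le> \<eta>"
      using that by (intro exI[of _ "t + (\<Sum>j<D. a j * z j) + c"]) (simp add: last_coord_layer_affine)
  qed
  then show ?thesis unfolding shear_approximable_def by (meson less_imp_le)
qed

lemma shear_approximable_add:
  assumes "shear_approximable D S \<phi>" "shear_approximable D S \<psi>" "\<forall>z\<in>S. \<bar>\<phi> z\<bar> \<le> M"
  shows "shear_approximable D S (\<lambda>z. \<phi> z + \<psi> z)"
  unfolding shear_approximable_def
proof (intro allI impI)
  fix R \<eta> :: real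
  assume "0 < \<eta>"
  then obtain N1 N2 where N1: "realizes_shear D S \<phi> R (\<eta>/2) N1"
    and N2: "realizes_shear D S \<psi> (R + M + \<eta>/2) (\<eta>/2) N2"
    using assms(1,2) by (meson half_gt_zero shear_approximableD)
  have "realizes_shear D S (\<lambda>z. \<phi> z + \<psi> z) R \<eta> (N2 \<circ> N1)"
    unfolding realizes_shear_def
  proof (intro conjI ballI allI impI)
    show "nn_pre (Suc D) (Suc D) (N2 \<circ> N1)"
      using N1 N2 by (simp add: realizes_shear_def nn_pre_comp)
    fix z t assume z: "z \<in> S" and t: "\<bar>t\<bar> \<le> R"
    obtain v1 where v1: "N1 (z(D := t)) = z(D := v1)" "\<bar>v1 - t - \<phi> z\<bar> \<le> \<eta>/2"
      using realizes_shearD[OF N1 z t] .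
    have "\<bar>\<phi> z\<bar> \<le> M" using assms(3) z by blast
    then have "\<bar>v1\<bar> \<le> R + M + \<eta>/2" using v1(2) t by arith
    then obtain v2 where v2: "N2 (z(D := v1)) = z(D := v2)" "\<bar>v2 - v1 - \<psi> z\<bar> \<le> \<eta>/2"
      using realizes_shearD[OF N2 z] by blast
    show "\<exists>v. (N2 \<circ> N1) (z(D := t)) = z(D := v) \<and> \<bar>v - t - (\<phi> z + \<psi> z)\<bar> \<le> \<eta>"
    proof (intro exI conjI)
      show "(N2 \<circ> N1) (z(D := t)) = z(D := v2)" using v1(1) v2(1) by simp
      show "\<bar>v2 - t - (\<phi> z + \<psi> z)\<bar> \<le> \<eta>" using v1(2) v2(2) by arith
    qed
  qed
  then show "\<exists>N. realizes_shear D S (\<lambda>z. \<phi> z + \<psi> z) R \<eta> N" by blast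
qed

lemma shear_approximable_scale:
  assumes S: "S \<subseteq> rvec D" and \<phi>: "shear_approximable D S \<phi>"
  shows "shear_approximable D S (\<lambda>z. c * \<phi> z)"
proof (cases "c = 0")
  case True
  then show ?thesis using shear_approximable_affine[OF S, of "\<lambda>_. 0" 0] by simp
next
  case False
  let ?L = "\<lambda>s. last_coord_layer D 1 s (\<lambda>_. 0) 0 0"
  have L: "?L s (z(D := t)) = z(D := s * t)" if "z \<in> S" for s t z
    using last_coord_layer_affine[of z D s "\<lambda>_. 0" 0 t] that S by auto
  show ?thesis
    unfolding shear_approximable_def
  proof (intro allI impI)
    fix R \<eta> :: real
    assume "0 < \<eta>"
    then obtain N where N: "realizes_shear D S \<phi> (\<bar>R\<bar> / \<bar>c\<bar>) (\<eta> / \<bar>c\<bar>) N"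
      using False \<phi> by (meson divide_pos_pos shear_approximableD zero_less_abs_iff)
    have "realizes_shear D S (\<lambda>z. c * \<phi> z) R \<eta> (?L c \<circ> N \<circ> ?L (1/c))"
      unfolding realizes_shear_def
    proof (intro conjI ballI allI impI)
      show "nn_pre (Suc D) (Suc D) (?L c \<circ> N \<circ> ?L (1/c))"
        using N by (simp add: realizes_shear_def nn_pre_comp nn_pre_last_coord_layer)
      fix z t assume z: "z \<in> S" and t: "\<bar>t\<bar> \<le> R"
      have "\<bar>t / c\<bar> \<le> \<bar>R\<bar> / \<bar>c\<bar>" using t by (simp add: abs_divide divide_right_mono)
      then obtain v where v: "N (z(D := t / c)) = z(D := v)" "\<bar>v - t / c - \<phi> z\<bar> \<le> \<eta> / \<bar>c\<bar>"
        using realizes_shearD[OF N z] by blast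
      have "\<bar>c * v - t - c * \<phi> z\<bar> = \<bar>c\<bar> * \<bar>v - t / c - \<phi> z\<bar>"
        using False by (simp add: abs_mult[symmetric] algebra_simps)
      also have "\<dots> \<le> \<eta>" using v(2) False by (simp add: field_simps)
      finally show "\<exists>v. (?L c \<circ> N \<circ> ?L (1/c)) (z(D := t)) = z(D := v) \<and> \<bar>v - t - c * \<phi> z\<bar> \<le> \<eta>"
        using v(1) z by (intro exI[of _ "c * v"]) (simp add: L)
    qed
    then show "\<exists>N. realizes_shear D S (\<lambda>z. c * \<phi> z) R \<eta> N" by blast
  qed
qed

lemma leaky_relu_pos_part_estimate:
  fixes \<epsilon> \<eta> u v y p :: real
  assumes "0 < \<epsilon>" "\<bar>u - (\<epsilon> * y - p)\<bar> \<le> \<eta>" "\<bar>v - (LReLU (1 - \<epsilon>) u + p)\<bar> \<le> \<eta>"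
  shows "\<bar>v / \<epsilon> - y - max p 0\<bar> \<le> 2 * \<eta> / \<epsilon> + \<eta> + \<epsilon> * \<bar>y\<bar>"
proof -
  have "\<bar>v - \<epsilon> * (y - min u 0)\<bar> \<le> 2 * \<eta>"
    using assms(2,3) by (simp add: LReLU_eq_sub_min algebra_simps)
  then have "\<bar>v / \<epsilon> - (y - min u 0)\<bar> \<le> 2 * \<eta> / \<epsilon>"
    using assms(1) by (simp add: field_simps abs_divide)
  moreover have "\<bar>\<epsilon> * y\<bar> = \<epsilon> * \<bar>y\<bar>" using assms(1) by (simp add: abs_mult)
  then have "\<bar>min u 0 + max p 0\<bar> \<le> \<eta> + \<epsilon> * \<bar>y\<bar>" using assms(2) by arith
  ultimately show ?thesis by arith
qed

lemma shear_approximable_pos_part: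
  assumes S: "S \<subseteq> rvec D" and \<phi>: "shear_approximable D S \<phi>"
    and M: "\<forall>z\<in>S. \<bar>\<phi> z\<bar> \<le> M" and C: "\<forall>z\<in>S. \<forall>j<D. \<bar>z j\<bar> \<le> C"
  shows "shear_approximable D S (\<lambda>z. max (\<phi> z) 0)"
  unfolding shear_approximable_def
proof (intro allI impI)
  fix R \<eta> :: real
  assume "0 < \<eta>"
  define \<epsilon> where "\<epsilon> = min 1 (\<eta> / (3 * (\<bar>R\<bar> + 1)))"
  define \<eta>1 where "\<eta>1 = \<epsilon> * \<eta> / 6"
  have \<epsilon>: "0 < \<epsilon>" "\<epsilon> \<le> 1" using \<open>0 < \<eta>\<close> by (auto simp: \<epsilon>_def)
  have "\<epsilon> * (\<bar>R\<bar> + 1) \<le> \<eta> / 3"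
    unfolding \<epsilon>_def by (simp add: min_def field_simps add_pos_nonneg)
  then have \<epsilon>R: "\<epsilon> * \<bar>R\<bar> \<le> \<eta> / 3" using \<epsilon>(1) by (simp add: algebra_simps)
  have "0 < \<eta>1" using \<epsilon>(1) \<open>0 < \<eta>\<close> by (simp add: \<eta>1_def)
  then obtain N1 N2 where N1: "realizes_shear D S (\<lambda>z. -1 * \<phi> z) \<bar>R\<bar> \<eta>1 N1"
    and N2: "realizes_shear D S \<phi> (\<bar>R\<bar> + M + \<eta>1) \<eta>1 N2"
    using \<phi> shear_approximable_scale[OF S \<phi>] by (meson shear_approximableD)
  let ?L = "\<lambda>s. last_coord_layer D 1 s (\<lambda>_. 0) 0 0"
  let ?leaky = "last_coord_layer D 1 1 (\<lambda>_. 0) (-C) 0 \<circ> last_coord_layer D (1 - \<epsilon>) 1 (\<lambda>_. 0) C 0"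
  have "realizes_shear D S (\<lambda>z. max (\<phi> z) 0) R \<eta> (?L (1/\<epsilon>) \<circ> N2 \<circ> ?leaky \<circ> N1 \<circ> ?L \<epsilon>)"
    unfolding realizes_shear_def
  proof (intro conjI ballI allI impI)
    show "nn_pre (Suc D) (Suc D) (?L (1/\<epsilon>) \<circ> N2 \<circ> ?leaky \<circ> N1 \<circ> ?L \<epsilon>)"
      using N1 N2 by (simp add: realizes_shear_def nn_pre_comp nn_pre_last_coord_layer)
    fix z t assume z: "z \<in> S" and t: "\<bar>t\<bar> \<le> R"
    have zD: "z \<in> rvec D" using S z by blast
    have "\<bar>\<epsilon> * t\<bar> \<le> \<bar>t\<bar>" using \<epsilon> by (simp add: abs_mult mult_left_le_one_le)
    then have "\<bar>\<epsilon> * t\<bar> \<le> \<bar>R\<bar>" using t by arith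
    then obtain u where u: "N1 (z(D := \<epsilon> * t)) = z(D := u)" "\<bar>u - \<epsilon> * t - -1 * \<phi> z\<bar> \<le> \<eta>1"
      using realizes_shearD[OF N1 z] by blast
    have "\<bar>LReLU (1 - \<epsilon>) u\<bar> \<le> \<bar>u\<bar>" using \<epsilon> by (intro abs_LReLU_le) auto
    moreover have "\<bar>\<phi> z\<bar> \<le> M" using M z by blast
    ultimately have "\<bar>LReLU (1 - \<epsilon>) u\<bar> \<le> \<bar>R\<bar> + M + \<eta>1"
      using u(2) \<open>\<bar>\<epsilon> * t\<bar> \<le> \<bar>R\<bar>\<close> by arith
    then obtain v where v: "N2 (z(D := LReLU (1 - \<epsilon>) u)) = z(D := v)"
        "\<bar>v - LReLU (1 - \<epsilon>) u - \<phi> z\<bar> \<le> \<eta>1"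
      using realizes_shearD[OF N2 z] by blast
    have "\<bar>v / \<epsilon> - t - max (\<phi> z) 0\<bar> \<le> 2 * \<eta>1 / \<epsilon> + \<eta>1 + \<epsilon> * \<bar>t\<bar>"
      using u(2) v(2) by (intro leaky_relu_pos_part_estimate[OF \<epsilon>(1)]) (simp_all add: algebra_simps)
    also have "\<dots> \<le> \<eta>"
    proof -
      have "\<epsilon> * \<bar>t\<bar> \<le> \<epsilon> * \<bar>R\<bar>" using \<epsilon>(1) t by (simp add: mult_left_mono)
      moreover have "2 * \<eta>1 / \<epsilon> = \<eta> / 3" "\<eta>1 \<le> \<eta> / 6"
        using \<epsilon> \<open>0 < \<eta>\<close> by (simp_all add: \<eta>1_def mult_left_le_one_le)
      ultimately show ?thesis using \<epsilon>R \<open>0 < \<eta>\<close> by linarith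
    qed
    finally show "\<exists>w. (?L (1/\<epsilon>) \<circ> N2 \<circ> ?leaky \<circ> N1 \<circ> ?L \<epsilon>) (z(D := t)) = z(D := w)
        \<and> \<bar>w - t - max (\<phi> z) 0\<bar> \<le> \<eta>"
      using zD C z u(1) v(1)
      by (intro exI[of _ "v / \<epsilon>"]) (simp add: last_coord_layer_affine last_coord_layer_leaky)
  qed
  then show "\<exists>N. realizes_shear D S (\<lambda>z. max (\<phi> z) 0) R \<eta> N" by blast
qed

lemma compact_coordinates_bounded:
  fixes S :: "(nat \<Rightarrow> real) set"
  assumes "compact S"
  obtains C where "\<forall>z\<in>S. \<forall>j<D. \<bar>z j\<bar> \<le> C"
proof -
  have "\<exists>B. \<forall>z\<in>S. \<bar>z j\<bar> \<le> B" for j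
    using continuous_on_compact_bound[OF assms continuous_on_coordinate] by (metis real_norm_def)
  then obtain B where B: "\<And>j z. z \<in> S \<Longrightarrow> \<bar>z j\<bar> \<le> B j" by metis
  have "\<bar>z j\<bar> \<le> (\<Sum>k<D. \<bar>B k\<bar>)" if "z \<in> S" "j < D" for z j
  proof -
    have "\<bar>z j\<bar> \<le> \<bar>B j\<bar>" using B[OF that(1)] by (meson abs_ge_self order_trans)
    also have "\<dots> \<le> (\<Sum>k<D. \<bar>B k\<bar>)" using that(2) by (intro member_le_sum) auto
    finally show ?thesis .
  qed
  then show ?thesis by (intro that) blast
qed

lemma compact_continuous_abs_bound:
  fixes f :: "'a::topological_space \<Rightarrow> real"
  assumes "compact S" "continuous_on S f"
  obtains M where "\<forall>z\<in>S. \<bar>f z\<bar> \<le> M"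
  using continuous_on_compact_bound[OF assms] by (metis real_norm_def)

lemma shear_approximable_max:
  assumes S: "compact S" "S \<subseteq> rvec D"
    and \<phi>: "continuous_on S \<phi>" "shear_approximable D S \<phi>"
    and \<psi>: "continuous_on S \<psi>" "shear_approximable D S \<psi>"
  shows "shear_approximable D S (\<lambda>z. max (\<phi> z) (\<psi> z))"
proof -
  obtain C where C: "\<forall>z\<in>S. \<forall>j<D. \<bar>z j\<bar> \<le> C" using compact_coordinates_bounded[OF S(1)] .
  obtain M\<phi> where M\<phi>: "\<forall>z\<in>S. \<bar>\<phi> z\<bar> \<le> M\<phi>" using compact_continuous_abs_bound[OF S(1) \<phi>(1)] .
  obtain M\<psi> where M\<psi>: "\<forall>z\<in>S. \<bar>\<psi> z\<bar> \<le> M\<psi>" using compact_continuous_abs_bound[OF S(1) \<psi>(1)] .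
  have "shear_approximable D S (\<lambda>z. \<psi> z + -1 * \<phi> z)"
    using shear_approximable_add[OF \<psi>(2) shear_approximable_scale[OF S(2) \<phi>(2)] M\<psi>] .
  moreover have "\<forall>z\<in>S. \<bar>\<psi> z + -1 * \<phi> z\<bar> \<le> M\<psi> + M\<phi>"
    using M\<phi> M\<psi> by (smt (verit))
  ultimately have "shear_approximable D S (\<lambda>z. max (\<psi> z + -1 * \<phi> z) 0)"
    using shear_approximable_pos_part[OF S(2) _ _ C] by blast
  then have "shear_approximable D S (\<lambda>z. \<phi> z + max (\<psi> z + -1 * \<phi> z) 0)"
    using shear_approximable_add[OF \<phi>(2) _ M\<phi>] by blast
  moreover have "(\<lambda>z. \<phi> z + max (\<psi> z + -1 * \<phi> z) 0) = (\<lambda>z. max (\<phi> z) (\<psi> z))"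
    by (auto simp: max_def)
  ultimately show ?thesis by simp
qed

lemma shear_approximable_min:
  assumes S: "compact S" "S \<subseteq> rvec D"
    and \<phi>: "continuous_on S \<phi>" "shear_approximable D S \<phi>"
    and \<psi>: "continuous_on S \<psi>" "shear_approximable D S \<psi>"
  shows "shear_approximable D S (\<lambda>z. min (\<phi> z) (\<psi> z))"
proof -
  have "shear_approximable D S (\<lambda>z. max (-1 * \<phi> z) (-1 * \<psi> z))"
    using \<phi> \<psi> by (intro shear_approximable_max[OF S] shear_approximable_scale[OF S(2)] continuous_intros)
  then have "shear_approximable D S (\<lambda>z. -1 * max (-1 * \<phi> z) (-1 * \<psi> z))"
    by (rule shear_approximable_scale[OF S(2)])
  moreover have "(\<lambda>z. -1 * max (-1 * \<phi> z) (-1 * \<psi> z)) = (\<lambda>z. min (\<phi> z) (\<psi> z))"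
    by (auto simp: max_def min_def)
  ultimately show ?thesis by simp
qed

lemma affine_functional_interpolation:
  assumes "x \<in> rvec D" "y \<in> rvec D" "x = y \<Longrightarrow> \<alpha> = \<beta>"
  shows "\<exists>a c. (\<Sum>j<D. a j * x j) + c = \<alpha> \<and> (\<Sum>j<D. a j * y j) + c = \<beta>"
proof (cases "x = y")
  case True
  then show ?thesis using assms(3) by (intro exI[of _ "\<lambda>_. 0"] exI[of _ \<alpha>]) simp
next
  case False
  then obtain j where j: "x j \<noteq> y j" by auto
  have "j < D"
  proof (rule ccontr)
    assume "\<not> j < D"
    then have "x j = 0" "y j = 0" using assms(1,2) by (simp_all add: rvec_def)
    with j show False by simp
  qed
  define s where "s = (\<beta> - \<alpha>) / (y j - x j)"
  have sum_eq: "(\<Sum>k<D. (if k = j then s else 0) * z k) = s * z j" for z :: "nat \<Rightarrow> real"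
    using \<open>j < D\<close> by (simp add: if_distrib[of "\<lambda>c. c * _"] sum.delta cong: if_cong)
  have "s * (y j - x j) = \<beta> - \<alpha>"
    using j by (simp add: s_def)
  then have "s * y j + (\<alpha> - s * x j) = \<beta>"
    by (simp add: algebra_simps)
  then show ?thesis
    by (intro exI[of _ "\<lambda>k. if k = j then s else 0"] exI[of _ "\<alpha> - s * x j"]) (simp add: sum_eq)
qed

lemma shear_approximable_dense:
  assumes S: "compact S" "S \<subseteq> rvec D" and f: "continuous_on S f" and e: "0 < e"
  obtains \<phi> where "shear_approximable D S \<phi>" "\<forall>z\<in>S. \<bar>f z - \<phi> z\<bar> < e"
proof (cases "S = {}")
  case True
  then show ?thesis using shear_approximable_affine[OF S(2)] that by blast
next
  case False
  let ?L = "{\<phi>. continuous_on S \<phi> \<and> shear_approximable D S \<phi>}"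
  have "\<exists>g\<in>?L. \<forall>z\<in>S. \<bar>f z - g z\<bar> < e"
  proof (rule lattice_Stone_Weierstrass[OF S(1) False _ _ _ _ f e])
    show "continuous_on S g" if "g \<in> ?L" for g
      using that by simp
    show "(\<lambda>z. max (g z) (h z)) \<in> ?L" if "g \<in> ?L" "h \<in> ?L" for g h
      using that by (simp add: shear_approximable_max[OF S] continuous_on_max)
    show "(\<lambda>z. min (g z) (h z)) \<in> ?L" if "g \<in> ?L" "h \<in> ?L" for g h
      using that by (simp add: shear_approximable_min[OF S] continuous_on_min)
    fix x y and a b :: real
    assume "x \<in> S" "y \<in> S" "x = y \<Longrightarrow> a = b"
    then obtain w c where "(\<Sum>j<D. w j * x j) + c = a" "(\<Sum>j<D. w j * y j) + c = b"
      using affine_functional_interpolation S(2) by blast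
    moreover have "(\<lambda>z. (\<Sum>j<D. w j * z j) + c) \<in> ?L"
      using shear_approximable_affine[OF S(2)] by (simp add: continuous_on_sum continuous_on_add
          continuous_on_mult continuous_on_const continuous_on_coordinate)
    ultimately show "\<exists>g\<in>?L. g x = a \<and> g y = b" by (intro bexI) auto
  qed
  then show ?thesis using that by blast
qed

lemma realizes_shear_approximates_shear_map:
  assumes N: "realizes_shear D (prefix_vec D ` K) \<phi> R \<eta> N"
    and K: "K \<subseteq> rvec (Suc D)" "\<forall>x\<in>K. \<bar>x D\<bar> \<le> R"
    and \<phi>: "\<forall>z\<in>prefix_vec D ` K. \<bar>t z - \<phi> z\<bar> \<le> \<delta>" and x: "x \<in> K"
  shows "\<bar>shear_map (Suc D) t x i - N x i\<bar> \<le> \<delta> + \<eta>"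
proof -
  let ?z = "prefix_vec D x"
  have "?z \<in> prefix_vec D ` K" "\<bar>x D\<bar> \<le> R" using x K(2) by auto
  then obtain v where v: "N (?z(D := x D)) = ?z(D := v)" "\<bar>v - x D - \<phi> ?z\<bar> \<le> \<eta>"
    using realizes_shearD[OF N] by blast
  have "N x = ?z(D := v)" using v(1) rvec_Suc_eq_prefix_upd[of x D] x K(1) by auto
  moreover have "\<bar>t ?z - \<phi> ?z\<bar> \<le> \<delta>" using \<phi> x by blast
  ultimately show ?thesis using v(2) by (simp add: shear_map_Suc) arith
qed

theorem mainTheorem6:
  fixes d :: nat and t :: "(nat \<Rightarrow> real) \<Rightarrow> real"
    and K :: "(nat \<Rightarrow> real) set" and \<epsilon> :: real
  assumes "d \<ge> 2"
    and "continuous_on (rvec (d - 1)) t"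
    and "compact K" and "K \<subseteq> rvec d"
    and "\<epsilon> > 0"
  shows "\<exists>g \<in> NN_LReLU d. \<exists>\<delta> < \<epsilon>. \<forall>x \<in> K. \<forall>i < d.
           \<bar>shear_map d t x i - g x i\<bar> \<le> \<delta>"
proof -
  obtain D where d: "d = Suc D" using assms(1) by (cases d) auto
  define S where "S = prefix_vec D ` K"
  have S: "compact S" "S \<subseteq> rvec D"
    using compact_continuous_image[OF continuous_on_prefix_vec assms(3)] prefix_vec_in_rvec
    by (auto simp: S_def)
  have "continuous_on S t" using continuous_on_subset[OF assms(2)] S(2) d by simp
  then obtain \<phi> where \<phi>: "shear_approximable D S \<phi>" "\<forall>z\<in>S. \<bar>t z - \<phi> z\<bar> < \<epsilon> / 2"
    using shear_approximable_dense[OF S] assms(5) by (metis half_gt_zero)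
  obtain R where R: "\<forall>x\<in>K. \<bar>x D\<bar> \<le> R"
    using compact_continuous_abs_bound[OF assms(3) continuous_on_coordinate] .
  obtain N where N: "realizes_shear D S \<phi> R (\<epsilon> / 4) N"
    using shear_approximableD[OF \<phi>(1)] assms(5) by (metis divide_pos_pos zero_less_numeral)
  then obtain g where g: "g \<in> NN_LReLU d" "\<forall>x. \<forall>i<d. g x i = N x i"
    using NN_LReLU_of_nn_pre[of d N] d unfolding realizes_shear_def by blast
  have "\<bar>shear_map d t x i - g x i\<bar> \<le> \<epsilon> / 2 + \<epsilon> / 4" if "x \<in> K" "i < d" for x i
    using realizes_shear_approximates_shear_map[OF N[unfolded S_def] _ R _ that(1), of t "\<epsilon> / 2" i]
      assms(4) \<phi>(2) g(2) that(2) d by (simp add: S_def less_imp_le)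
  moreover have "\<epsilon> / 2 + \<epsilon> / 4 < \<epsilon>" using assms(5) by simp
  ultimately show ?thesis using g(1) by blast
qed

end
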